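(* Fix integers $N\ge 2$ and $K\ge 1$. For every $r\ge 2$, $M^{\text{TransE}}$ does not subsume $M^{\text{RESCAL}}_r$, i.e. $\pi(\mathcal{M}^{\text{RESCAL}}_r)\not\subseteq\pi(\mathcal{M}^{\text{TransE}})$.
   Context: There are $N$ entities and $K$ relations. A score-based model assigns a score $s_k(i,j)\in\mathbb{R}$ to each triple, $i,j\in\{1,\dots,N\}$, $k\in\{1,\dots,K\}$; its scoring tensor $\mathcal{S}\in\mathbb{R}^{N\times N\times K}$ has frontal slices $\mathbf{S}_k$ with $[\mathbf{S}_k]_{ij}=s_k(i,j)$. For a real $N\times N$ matrix $\mathbf{S}$, $\pi(\mathbf{S})$ is the matrix of dense ranks: $\pi_{ij}(\mathbf{S})=1+$ (number of distinct values among entries of $\mathbf{S}$ strictly larger than $s_{ij}$). For tensors, $\pi$ acts slicewise; for a set $X$, $\pi(X)=\{\pi(x):x\in X\}$. RESCAL of size $r$: parameters $\mathbf{A}\in\mathbb{R}^{N\times r}$ (rows $\mathbf{a}_i$), $\mathbf{R}_1,\dots,\mathbf{R}_K\in\mathbb{R}^{r\times r}$, score $\mathbf{a}_i^T\mathbf{R}_k\mathbf{a}_j$. TransE of size $r$: parameters $\mathbf{A}\in\mathbb{R}^{N\times r}$, $\mathbf{R}\in\mathbb{R}^{K\times r}$ (rows $\mathbf{r}_k$), score $-\|\mathbf{a}_i+\mathbf{r}_k-\mathbf{a}_j\|_2^2$. $\mathcal{M}^t_r$ is the set of scoring tensors of all models of type $t$ and size $r$, and $\mathcal{M}^t=\bigcup_{r\in\mathbb{N}^+}\mathcal{M}^t_r$.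 A class $M^{t_2}$ subsumes $M^{t_1}$ if $\pi(\mathcal{M}^{t_1})\subseteq\pi(\mathcal{M}^{t_2})$. *)

theory Defs
  imports Main "HOL.Real"
begin

text \<open>Entities are indexed 1..N, relations 1..K, embedding coordinates 1..r.
  A scoring tensor is a function T with T i j k = s_k(i,j); only its values on
  {1..N} x {1..N} x {1..K} matter.\<close>

definition dense_rank :: "nat \<Rightarrow> (nat \<Rightarrow> nat \<Rightarrow> real) \<Rightarrow> nat \<Rightarrow> nat \<Rightarrow> nat" where
  "dense_rank N S i j =
     1 + card {v. (\<exists>a\<in>{1..N}. \<exists>b\<in>{1..N}. v = S a b) \<and> v > S i j}"

text \<open>Slicewise dense-rank tensor; set to 0 outside the index range so that
  equality of rank tensors only compares the relevant entries.\<close>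
definition pi_tensor :: "nat \<Rightarrow> nat \<Rightarrow> (nat \<Rightarrow> nat \<Rightarrow> nat \<Rightarrow> real) \<Rightarrow> (nat \<Rightarrow> nat \<Rightarrow> nat \<Rightarrow> nat)" where
  "pi_tensor N K T = (\<lambda>i j k.
     if i \<in> {1..N} \<and> j \<in> {1..N} \<and> k \<in> {1..K}
     then dense_rank N (\<lambda>a b. T a b k) i j else 0)"

definition rescal_tensors :: "nat \<Rightarrow> nat \<Rightarrow> nat \<Rightarrow> (nat \<Rightarrow> nat \<Rightarrow> nat \<Rightarrow> real) set" where
  "rescal_tensors N K r =
     {T. \<exists>(A::nat \<Rightarrow> nat \<Rightarrow> real) (R::nat \<Rightarrow> nat \<Rightarrow> nat \<Rightarrow> real).
        T = (\<lambda>i j k. \<Sum>l\<in>{1..r}. \<Sum>m\<in>{1..r}. A i l * R k l m * A j m)}"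

definition transe_tensors :: "nat \<Rightarrow> nat \<Rightarrow> nat \<Rightarrow> (nat \<Rightarrow> nat \<Rightarrow> nat \<Rightarrow> real) set" where
  "transe_tensors N K r =
     {T. \<exists>(A::nat \<Rightarrow> nat \<Rightarrow> real) (R::nat \<Rightarrow> nat \<Rightarrow> real).
        T = (\<lambda>i j k. - (\<Sum>l\<in>{1..r}. (A i l + R k l - A j l)\<^sup>2))}"

definition transe_all :: "nat \<Rightarrow> nat \<Rightarrow> (nat \<Rightarrow> nat \<Rightarrow> nat \<Rightarrow> real) set" where
  "transe_all N K = (\<Union>r\<in>{r. r \<ge> 1}. transe_tensors N K r)"

end

theory Submission
  imports Defs
begin

text \<open>A TransE score depends on the pair (i,i) only through the relation vector, since
  \<open>a\<^sub>i + r\<^sub>k - a\<^sub>i = r\<^sub>k\<close>: all diagonal triples of a slice get the same score and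
  hence the same dense rank. RESCAL of any size can score the triple (1,1) above every
  other one, so the diagonal entries (1,1) and (2,2) receive different ranks.\<close>

lemma dense_rank_less:
  assumes "a \<in> {1..N}" "b \<in> {1..N}" "S c d < S a b"
  shows "dense_rank N S a b < dense_rank N S c d"
proof -
  let ?V = "{v. \<exists>x\<in>{1..N}. \<exists>y\<in>{1..N}. v = S x y}"
  have "finite ?V"
    using finite_image_set2[of "\<lambda>a. a \<in> {1..N}" "\<lambda>b. b \<in> {1..N}" S] by simp
  moreover have "{v \<in> ?V. v > S a b} \<subset> {v \<in> ?V. v > S c d}"
  proof
    show "{v \<in> ?V. v > S a b} \<subseteq> {v \<in> ?V. v > S c d}"
      using assms(3) by auto
    have "S a b \<in> ?V"
      using assms(1,2) by (intro CollectI bexI[of _ a] bexI[of _ b] refl)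
    then have "S a b \<in> {v \<in> ?V. v > S c d}"
      using assms(3) by blast
    then show "{v \<in> ?V. v > S a b} \<noteq> {v \<in> ?V. v > S c d}"
      by blast
  qed
  ultimately have "card {v \<in> ?V. v > S a b} < card {v \<in> ?V. v > S c d}"
    by (intro psubset_card_mono) auto
  then show ?thesis
    unfolding dense_rank_def by simp
qed

lemma transe_tensor_diagonal:
  assumes "T \<in> transe_all N K"
  shows "T i i k = T j j k"
  using assms by (auto simp: transe_all_def transe_tensors_def)

lemma rescal_tensor_indicator:
  assumes "r \<ge> 1"
  shows "(\<lambda>i j k. if i = 1 \<and> j = 1 then 1 else 0) \<in> rescal_tensors N K r"
proof -
  define A :: "nat \<Rightarrow> nat \<Rightarrow> real" where "A i l = (if i = 1 \<and> l = 1 then 1 else 0)" for i l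
  define R :: "nat \<Rightarrow> nat \<Rightarrow> nat \<Rightarrow> real" where "R k l m = (if l = 1 \<and> m = 1 then 1 else 0)" for k l m
  have "(\<Sum>l\<in>{1..r}. \<Sum>m\<in>{1..r}. A i l * R k l m * A j m) = (if i = 1 \<and> j = 1 then 1 else 0)"
    for i j k
  proof -
    have "(\<Sum>l\<in>{1..r}. \<Sum>m\<in>{1..r}. A i l * R k l m * A j m)
        = (\<Sum>l\<in>{1..r}. \<Sum>m\<in>{1..r}. if l = 1 then if m = 1 then A i 1 * A j 1 else 0 else 0)"
      by (intro sum.cong refl) (simp add: A_def R_def)
    also have "\<dots> = (\<Sum>l\<in>{1..r}. if l = 1 then A i 1 * A j 1 else 0)"
      using assms by (intro sum.cong refl) (simp add: sum.delta)
    also have "\<dots> = A i 1 * A j 1"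
      using assms by (simp add: sum.delta)
    finally show ?thesis
      by (simp add: A_def)
  qed
  then show ?thesis
    unfolding rescal_tensors_def by (intro CollectI exI[of _ A] exI[of _ R]) auto
qed

theorem theorem2:
  fixes N K r :: nat
  assumes "N \<ge> 2" and "K \<ge> 1" and "r \<ge> 2"
  shows "\<not> (pi_tensor N K ` rescal_tensors N K r \<subseteq> pi_tensor N K ` transe_all N K)"
proof
  assume "pi_tensor N K ` rescal_tensors N K r \<subseteq> pi_tensor N K ` transe_all N K"
  moreover define T :: "nat \<Rightarrow> nat \<Rightarrow> nat \<Rightarrow> real"
    where "T i j k = (if i = 1 \<and> j = 1 then 1 else 0)" for i j k
  moreover have "T \<in> rescal_tensors N K r"
    using rescal_tensor_indicator[of r N K] assms(3) by (simp add: T_def[abs_def])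
  ultimately obtain T' where "T' \<in> transe_all N K" and "pi_tensor N K T = pi_tensor N K T'"
    by blast
  then have "pi_tensor N K T 1 1 1 = pi_tensor N K T 2 2 1"
    using assms transe_tensor_diagonal[of T' N K 1 1 2] by (simp add: pi_tensor_def dense_rank_def)
  moreover have "dense_rank N (\<lambda>a b. T a b 1) 1 1 < dense_rank N (\<lambda>a b. T a b 1) 2 2"
    using assms by (intro dense_rank_less) (auto simp: T_def)
  ultimately show False
    using assms by (simp add: pi_tensor_def)
qed

end
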